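(* Let $L$ be a finite-dimensional Lie algebra over any field $F$ which has the one-and-a-half generation property. Then every proper non-zero semi-modular subalgebra of $L$ is a modular maximal subalgebra of $L$.
   Context: $L$ has the one-and-a-half generation property if for every $0\ne x\in L$ there is $y\in L$ with $\langle x,y\rangle=L$, where $\langle\,\cdot\,\rangle$ denotes the generated subalgebra. A subalgebra $B$ covers a subalgebra $A$ if $A$ is a maximal subalgebra of $B$. A subalgebra $U$ is modular in $L$ if $\langle U,B\rangle\cap C=\langle B,U\cap C\rangle$ for all subalgebras $B\subseteq C$ of $L$, and $\langle U,B\rangle\cap C=\langle B\cap C,U\rangle$ for all subalgebras $B,C$ of $L$ with $U\subseteq C$. $U$ is upper modular (um) in $L$ if whenever $B$ is a subalgebra of $L$ which covers $U\cap B$, then $\langle U,B\rangle$ covers $U$; $U$ is lower modular (lm) in $L$ if whenever $B$ is a subalgebra of $L$ such that $\langle U,B\rangle$ covers $U$, then $B$ covers $U\cap B$; $U$ is semi-modular (sm) in $L$ if it is both um and lm. *)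

theory Defs
  imports Complex_Main
begin

text \<open>A Lie algebra over a field: the carrier is the whole type 'v, scalars come from
  a field 'a, scale is scalar multiplication and br is the Lie bracket.\<close>

definition lie_algebra :: "('a::field \<Rightarrow> 'v::ab_group_add \<Rightarrow> 'v) \<Rightarrow> ('v \<Rightarrow> 'v \<Rightarrow> 'v) \<Rightarrow> bool" where
  "lie_algebra scale br \<longleftrightarrow>
     Vector_Spaces.vector_space scale \<and>
     (\<forall>x y z. br (x + y) z = br x z + br y z) \<and>
     (\<forall>x y z. br x (y + z) = br x y + br x z) \<and>
     (\<forall>c x y. br (scale c x) y = scale c (br x y)) \<and>
     (\<forall>c x y. br x (scale c y) = scale c (br x y)) \<and>
     (\<forall>x. br x x = 0) \<and>
     (\<forall>x y z. br x (br y z) + br y (br z x) + br z (br x y) = 0)"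

definition fin_dim_lie :: "('a::field \<Rightarrow> 'v::ab_group_add \<Rightarrow> 'v) \<Rightarrow> bool" where
  "fin_dim_lie scale \<longleftrightarrow> (\<exists>B. finite B \<and> Modules.module.span scale B = UNIV)"

definition lie_subalgebra :: "('a::field \<Rightarrow> 'v::ab_group_add \<Rightarrow> 'v) \<Rightarrow> ('v \<Rightarrow> 'v \<Rightarrow> 'v) \<Rightarrow> 'v set \<Rightarrow> bool" where
  "lie_subalgebra scale br A \<longleftrightarrow> Modules.module.subspace scale A \<and> (\<forall>x\<in>A. \<forall>y\<in>A. br x y \<in> A)"

definition gen :: "('a::field \<Rightarrow> 'v::ab_group_add \<Rightarrow> 'v) \<Rightarrow> ('v \<Rightarrow> 'v \<Rightarrow> 'v) \<Rightarrow> 'v set \<Rightarrow> 'v set" where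
  "gen scale br S = \<Inter>{A. lie_subalgebra scale br A \<and> S \<subseteq> A}"

definition one_and_half_gen :: "('a::field \<Rightarrow> 'v::ab_group_add \<Rightarrow> 'v) \<Rightarrow> ('v \<Rightarrow> 'v \<Rightarrow> 'v) \<Rightarrow> bool" where
  "one_and_half_gen scale br \<longleftrightarrow> (\<forall>x. x \<noteq> 0 \<longrightarrow> (\<exists>y. gen scale br {x, y} = UNIV))"

definition covers :: "('a::field \<Rightarrow> 'v::ab_group_add \<Rightarrow> 'v) \<Rightarrow> ('v \<Rightarrow> 'v \<Rightarrow> 'v) \<Rightarrow> 'v set \<Rightarrow> 'v set \<Rightarrow> bool" where
  "covers scale br B A \<longleftrightarrow>
     lie_subalgebra scale br A \<and> lie_subalgebra scale br B \<and> A \<subset> B \<and>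
     (\<forall>C. lie_subalgebra scale br C \<and> A \<subseteq> C \<and> C \<subseteq> B \<longrightarrow> C = A \<or> C = B)"

definition maximal_subalgebra :: "('a::field \<Rightarrow> 'v::ab_group_add \<Rightarrow> 'v) \<Rightarrow> ('v \<Rightarrow> 'v \<Rightarrow> 'v) \<Rightarrow> 'v set \<Rightarrow> bool" where
  "maximal_subalgebra scale br U \<longleftrightarrow> covers scale br UNIV U"

definition modular :: "('a::field \<Rightarrow> 'v::ab_group_add \<Rightarrow> 'v) \<Rightarrow> ('v \<Rightarrow> 'v \<Rightarrow> 'v) \<Rightarrow> 'v set \<Rightarrow> bool" where
  "modular scale br U \<longleftrightarrow> lie_subalgebra scale br U \<and>
     (\<forall>B C. lie_subalgebra scale br B \<and> lie_subalgebra scale br C \<and> B \<subseteq> C \<longrightarrow>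
        gen scale br (U \<union> B) \<inter> C = gen scale br (B \<union> (U \<inter> C))) \<and>
     (\<forall>B C. lie_subalgebra scale br B \<and> lie_subalgebra scale br C \<and> U \<subseteq> C \<longrightarrow>
        gen scale br (U \<union> B) \<inter> C = gen scale br ((B \<inter> C) \<union> U))"

definition upper_modular :: "('a::field \<Rightarrow> 'v::ab_group_add \<Rightarrow> 'v) \<Rightarrow> ('v \<Rightarrow> 'v \<Rightarrow> 'v) \<Rightarrow> 'v set \<Rightarrow> bool" where
  "upper_modular scale br U \<longleftrightarrow> lie_subalgebra scale br U \<and>
     (\<forall>B. lie_subalgebra scale br B \<and> covers scale br B (U \<inter> B) \<longrightarrow>
        covers scale br (gen scale br (U \<union> B)) U)"

definition lower_modular :: "('a::field \<Rightarrow> 'v::ab_group_add \<Rightarrow> 'v) \<Rightarrow> ('v \<Rightarrow> 'v \<Rightarrow> 'v) \<Rightarrow> 'v set \<Rightarrow> bool" where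
  "lower_modular scale br U \<longleftrightarrow> lie_subalgebra scale br U \<and>
     (\<forall>B. lie_subalgebra scale br B \<and> covers scale br (gen scale br (U \<union> B)) U \<longrightarrow>
        covers scale br B (U \<inter> B))"

definition semi_modular :: "('a::field \<Rightarrow> 'v::ab_group_add \<Rightarrow> 'v) \<Rightarrow> ('v \<Rightarrow> 'v \<Rightarrow> 'v) \<Rightarrow> 'v set \<Rightarrow> bool" where
  "semi_modular scale br U \<longleftrightarrow> upper_modular scale br U \<and> lower_modular scale br U"

end

theory Submission
  imports Defs
begin

text \<open>
  Let U be a proper non-zero semi-modular subalgebra.
  Maximality: pick 0 \<noteq> x \<in> U; by the one-and-a-half generation property some y
  satisfies \<langle>x, y\<rangle> = L, so y \<notin> U.  The line Fy is a subalgebra covering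
  U \<inter> Fy = 0, hence upper modularity makes \<langle>U, Fy\<rangle> = L cover U, i.e. U is maximal.
  Modularity: for a maximal subalgebra U the second modular law is automatic, since any
  C \<supseteq> U equals U or L.  For the first law with B \<subseteq> C and B \<not>\<subseteq> U we have
  \<langle>U, B\<rangle> = \<langle>U, C\<rangle> = L, so lower modularity says that C covers U \<inter> C, and
  \<langle>B, U \<inter> C\<rangle> lies strictly above U \<inter> C inside C, hence equals C.
\<close>

context
  fixes scale :: "'a::field \<Rightarrow> 'v::ab_group_add \<Rightarrow> 'v" and br :: "'v \<Rightarrow> 'v \<Rightarrow> 'v"
  assumes module: "module scale"
begin

lemma lie_subalgebra_Inter:
  assumes "\<forall>A\<in>F. lie_subalgebra scale br A"
  shows "lie_subalgebra scale br (\<Inter>F)"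
proof -
  have "module.subspace scale (\<Inter>F)"
    using assms by (intro module.subspace_Inter[OF module]) (simp add: lie_subalgebra_def)
  then show ?thesis
    using assms by (auto simp: lie_subalgebra_def)
qed

lemma lie_subalgebra_inter:
  "lie_subalgebra scale br A \<Longrightarrow> lie_subalgebra scale br B \<Longrightarrow> lie_subalgebra scale br (A \<inter> B)"
  by (simp add: lie_subalgebra_def module.subspace_inter[OF module])

lemma lie_subalgebra_zero: "lie_subalgebra scale br A \<Longrightarrow> 0 \<in> A"
  by (simp add: lie_subalgebra_def module.subspace_0[OF module])

lemma gen_subalgebra: "lie_subalgebra scale br (gen scale br S)"
  unfolding gen_def by (rule lie_subalgebra_Inter) auto

lemma gen_superset: "S \<subseteq> gen scale br S"
  unfolding gen_def by auto

lemma gen_least: "lie_subalgebra scale br A \<Longrightarrow> S \<subseteq> A \<Longrightarrow> gen scale br S \<subseteq> A"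
  unfolding gen_def by auto

lemma gen_mono: "S \<subseteq> T \<Longrightarrow> gen scale br S \<subseteq> gen scale br T"
  by (meson gen_subalgebra gen_least gen_superset order_trans)

lemma gen_subalgebra_eq: "lie_subalgebra scale br A \<Longrightarrow> gen scale br A = A"
  by (meson antisym gen_least gen_superset order_refl)

lemma maximal_gen_Un_eq_UNIV:
  assumes max: "maximal_subalgebra scale br U" and B: "\<not> B \<subseteq> U"
  shows "gen scale br (U \<union> B) = UNIV"
proof -
  have "U \<subseteq> gen scale br (U \<union> B)" and "gen scale br (U \<union> B) \<noteq> U"
    using gen_superset[of "U \<union> B"] B by blast+
  then show ?thesis
    using max gen_subalgebra[of "U \<union> B"] unfolding maximal_subalgebra_def covers_def by blast
qed

text \<open>The second modular law holds for every maximal subalgebra: the only subalgebras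
  containing U are U itself and L.\<close>

lemma maximal_second_modular_law:
  assumes max: "maximal_subalgebra scale br U"
    and C: "lie_subalgebra scale br C" and UC: "U \<subseteq> C"
  shows "gen scale br (U \<union> B) \<inter> C = gen scale br ((B \<inter> C) \<union> U)"
proof -
  have U: "lie_subalgebra scale br U"
    using max unfolding maximal_subalgebra_def covers_def by blast
  have "C = U \<or> C = UNIV"
    using max C UC unfolding maximal_subalgebra_def covers_def by blast
  then show ?thesis
  proof
    assume "C = U"
    moreover have "gen scale br ((B \<inter> U) \<union> U) = U"
      using gen_subalgebra_eq[OF U] by (simp add: Un_absorb1)
    moreover have "U \<subseteq> gen scale br (U \<union> B)"
      using gen_superset[of "U \<union> B"] by blast
    ultimately show ?thesis by auto
  qed (simp add: Un_commute)
qed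

lemma maximal_lower_modular_first_law:
  assumes max: "maximal_subalgebra scale br U" and lm: "lower_modular scale br U"
    and B: "lie_subalgebra scale br B" and C: "lie_subalgebra scale br C" and BC: "B \<subseteq> C"
  shows "gen scale br (U \<union> B) \<inter> C = gen scale br (B \<union> (U \<inter> C))"
proof (cases "B \<subseteq> U")
  case True
  have U: "lie_subalgebra scale br U"
    using max unfolding maximal_subalgebra_def covers_def by blast
  have "gen scale br (U \<union> B) = U"
    using True gen_subalgebra_eq[OF U] by (simp add: Un_absorb2)
  moreover have "B \<union> (U \<inter> C) = U \<inter> C"
    using True BC by blast
  ultimately show ?thesis
    using gen_subalgebra_eq[OF lie_subalgebra_inter[OF U C]] by simp
next
  case False
  have "gen scale br (U \<union> C) = UNIV"
    using maximal_gen_Un_eq_UNIV[OF max] False BC by blast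
  then have cover: "covers scale br C (U \<inter> C)"
    using lm C max unfolding lower_modular_def maximal_subalgebra_def by simp
  let ?G = "gen scale br (B \<union> (U \<inter> C))"
  have "?G \<subseteq> C"
    using B C BC gen_least[of C] by (metis Int_lower2 le_sup_iff subset_trans)
  moreover have "U \<inter> C \<subseteq> ?G" and "?G \<noteq> U \<inter> C"
    using gen_superset[of "B \<union> (U \<inter> C)"] False BC by blast+
  ultimately have "?G = C"
    using cover gen_subalgebra[of "B \<union> (U \<inter> C)"] unfolding covers_def by blast
  then show ?thesis
    using maximal_gen_Un_eq_UNIV[OF max False] by simp
qed

lemma maximal_lower_modular_imp_modular:
  assumes "maximal_subalgebra scale br U" and "lower_modular scale br U"
  shows "modular scale br U"
proof -
  have "lie_subalgebra scale br U"
    using assms(1) unfolding maximal_subalgebra_def covers_def by blast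
  then show ?thesis
    unfolding modular_def
    using maximal_lower_modular_first_law[OF assms] maximal_second_modular_law[OF assms(1)]
    by blast
qed

end

lemma line_covers_trivial_intersection:
  assumes L: "lie_algebra scale br"
    and U: "lie_subalgebra scale br U" and yU: "y \<notin> U"
  defines "Y \<equiv> range (\<lambda>c. scale c y)"
  shows "y \<in> Y" and "lie_subalgebra scale br Y" and "U \<inter> Y = {0}"
    and "covers scale br Y (U \<inter> Y)"
proof -
  interpret vector_space scale
    using L unfolding lie_algebra_def by blast
  have module: "module scale"
    by unfold_locales
  have bracket_scale_left: "\<And>c x z. br (scale c x) z = scale c (br x z)"
    and bracket_scale_right: "\<And>c x z. br x (scale c z) = scale c (br x z)"
    and bracket_self: "\<And>x. br x x = 0"
    using L unfolding lie_algebra_def by blast+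
  have line_closed: "scale c y \<in> Y" for c
    unfolding Y_def by (rule rangeI)
  have Y_subspace: "subspace Y"
  proof (rule subspaceI)
    show "0 \<in> Y"
      using line_closed[of 0] by simp
  next
    fix a b assume "a \<in> Y" "b \<in> Y"
    then obtain p q where "a = scale p y" "b = scale q y" unfolding Y_def by auto
    then show "a + b \<in> Y"
      using line_closed[of "p + q"] by (simp add: scale_left_distrib)
  next
    fix c a assume "a \<in> Y"
    then obtain p where "a = scale p y" unfolding Y_def by auto
    then show "scale c a \<in> Y"
      using line_closed[of "c * p"] by simp
  qed
  have "br a b \<in> Y" if ab: "a \<in> Y" "b \<in> Y" for a b
  proof -
    obtain p q where "a = scale p y" "b = scale q y"
      using ab unfolding Y_def by auto
    then have "br a b = scale 0 y"
      by (simp add: bracket_scale_left bracket_scale_right bracket_self)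
    then show ?thesis
      using line_closed[of 0] by simp
  qed
  with Y_subspace show Y: "lie_subalgebra scale br Y"
    unfolding lie_subalgebra_def by blast
  have y_in: "y \<in> S" if "subspace S" "z \<in> S" "z \<in> Y" "z \<noteq> 0" for S z
  proof -
    obtain c where c: "z = scale c y" using \<open>z \<in> Y\<close> unfolding Y_def by auto
    with \<open>z \<noteq> 0\<close> have "c \<noteq> 0" by auto
    then have "y = scale (inverse c) z" using c by simp
    then show "y \<in> S" using subspace_scale[OF that(1,2)] by simp
  qed
  have sU: "subspace U"
    using U unfolding lie_subalgebra_def by blast
  show UY: "U \<inter> Y = {0}"
    using y_in[OF sU] yU lie_subalgebra_zero[OF module U] lie_subalgebra_zero[OF module Y] by blast
  show yY: "y \<in> Y"
    using line_closed[of 1] by simp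
  show "covers scale br Y (U \<inter> Y)"
    unfolding covers_def UY
  proof (intro conjI allI impI)
    show "lie_subalgebra scale br {0}"
      unfolding lie_subalgebra_def using bracket_self by auto
    show "lie_subalgebra scale br Y"
      by (fact Y)
    show "{0} \<subset> Y"
      using yY yU lie_subalgebra_zero[OF module U] lie_subalgebra_zero[OF module Y] by auto
  next
    fix C assume C: "lie_subalgebra scale br C \<and> {0} \<subseteq> C \<and> C \<subseteq> Y"
    then have sC: "subspace C"
      unfolding lie_subalgebra_def by blast
    show "C = {0} \<or> C = Y"
    proof (cases "C = {0}")
      case False
      then obtain z where z: "z \<in> C" "z \<noteq> 0" using C by blast
      then have "z \<in> Y" using C by blast
      then have "y \<in> C" using y_in[OF sC z(1) _ z(2)] by blast
      then have "Y \<subseteq> C" unfolding Y_def using subspace_scale[OF sC] by auto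
      then show ?thesis using C by blast
    qed simp
  qed
qed

lemma one_and_half_gen_upper_modular_maximal:
  assumes L: "lie_algebra scale br" and oh: "one_and_half_gen scale br"
    and U: "lie_subalgebra scale br U" and "U \<noteq> UNIV" and "U \<noteq> {0}"
    and um: "upper_modular scale br U"
  shows "maximal_subalgebra scale br U"
proof -
  have module: "module scale"
    using L unfolding lie_algebra_def vector_space_def module_def by auto
  obtain x where x: "x \<in> U" "x \<noteq> 0"
    using \<open>U \<noteq> {0}\<close> lie_subalgebra_zero[OF module U] by blast
  then obtain y where xy: "gen scale br {x, y} = UNIV"
    using oh unfolding one_and_half_gen_def by blast
  have yU: "y \<notin> U"
    using gen_least[OF module U, of "{x, y}"] x xy \<open>U \<noteq> UNIV\<close> by auto
  define Y where "Y = range (\<lambda>c. scale c y)"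
  note line = line_covers_trivial_intersection[OF L U yU, folded Y_def]
  have "y \<in> Y"
    by (fact line(1))
  then have "gen scale br {x, y} \<subseteq> gen scale br (U \<union> Y)"
    using x by (intro gen_mono[OF module]) auto
  then have "gen scale br (U \<union> Y) = UNIV"
    using xy by auto
  moreover have "covers scale br (gen scale br (U \<union> Y)) U"
    using um line(2,4) unfolding upper_modular_def by blast
  ultimately show ?thesis
    unfolding maximal_subalgebra_def by simp
qed

theorem theorem2p8:
  fixes scale :: "'a::field \<Rightarrow> 'v::ab_group_add \<Rightarrow> 'v"
    and br :: "'v \<Rightarrow> 'v \<Rightarrow> 'v"
    and U :: "'v set"
  assumes "lie_algebra scale br"
    and "fin_dim_lie scale"
    and "one_and_half_gen scale br"
    and "lie_subalgebra scale br U"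
    and "U \<noteq> UNIV"
    and "U \<noteq> {0}"
    and "semi_modular scale br U"
  shows "modular scale br U \<and> maximal_subalgebra scale br U"
proof -
  have module: "module scale"
    using assms(1) unfolding lie_algebra_def vector_space_def module_def by auto
  have um: "upper_modular scale br U" and lm: "lower_modular scale br U"
    using assms(7) unfolding semi_modular_def by auto
  have max: "maximal_subalgebra scale br U"
    using one_and_half_gen_upper_modular_maximal[OF assms(1,3,4,5,6) um] .
  show ?thesis
    using maximal_lower_modular_imp_modular[OF module max lm] max by blast
qed

end
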